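(* Let $V\subseteq\mathcal V$ be finite and $\Theta,\Psi\subseteq\mathcal P(\mathcal H_V)$ arbitrary. Then (1) $\Theta\preceq_{dem}\Psi$ iff $(I-\Psi)\preceq_{ang}(I-\Theta)$; (2) $\Theta\le_S\Psi$ iff $(I-\Psi)\le_H(I-\Theta)$, where $I-\Theta=\{I-M:M\in\Theta\}$.
   Context: $\mathcal H_V$ is a finite-dimensional Hilbert space with identity $I$. $\mathcal D(\mathcal H_V)$: partial density operators; $\mathcal P(\mathcal H_V)$: effects (positive operators with eigenvalues in $[0,1]$); $\sqsubseteq$: Löwner order. $\mathrm{Exp}_{dem}(\rho\models\Theta)=\inf_{M\in\Theta}{\rm tr}(M\rho)$ (${\rm tr}(\rho)$ if $\Theta=\emptyset$); $\mathrm{Exp}_{ang}(\rho\models\Theta)=\sup_{M\in\Theta}{\rm tr}(M\rho)$ ($0$ if $\Theta=\emptyset$). $\Theta\preceq_{dem}\Psi$ iff $\mathrm{Exp}_{dem}(\rho\models\Theta)\le\mathrm{Exp}_{dem}(\rho\models\Psi)$ for all $\rho\in\mathcal D(\mathcal H_V)$; $\Theta\preceq_{ang}\Psi$ iff $\mathrm{Exp}_{ang}(\rho\models\Theta)\le\mathrm{Exp}_{ang}(\rho\models\Psi)$ for all $\rho\in\mathcal D(\mathcal H_V)$. $\Theta\le_H\Psi$ iff $\forall M\in\Theta\,\exists N\in\Psi:M\sqsubseteq N$; $\Theta\le_S\Psi$ iff $\forall N\in\Psi\,\exists M\in\Theta:M\sqsubseteq N$. *)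

theory Defs
  imports "Jordan_Normal_Form.Matrix"
begin

text \<open>Operators on the d-dimensional Hilbert space H_V are represented as
  complex d x d matrices (d = dim H_V).\<close>

definition mtrace :: "complex mat \<Rightarrow> complex" where
  "mtrace A = (\<Sum>i<dim_row A. A $$ (i, i))"

definition positive_op :: "nat \<Rightarrow> complex mat \<Rightarrow> bool" where
  "positive_op d A \<longleftrightarrow> A \<in> carrier_mat d d \<and>
     (\<forall>v \<in> carrier_vec d. Im (conjugate v \<bullet> (A *\<^sub>v v)) = 0 \<and> Re (conjugate v \<bullet> (A *\<^sub>v v)) \<ge> 0)"

definition loewner_le :: "nat \<Rightarrow> complex mat \<Rightarrow> complex mat \<Rightarrow> bool" where
  "loewner_le d A B \<longleftrightarrow> A \<in> carrier_mat d d \<and> B \<in> carrier_mat d d \<and> positive_op d (B - A)"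

definition pdensity :: "nat \<Rightarrow> complex mat set" where
  "pdensity d = {\<rho>. positive_op d \<rho> \<and> Re (mtrace \<rho>) \<le> 1}"

definition effects :: "nat \<Rightarrow> complex mat set" where
  "effects d = {M. positive_op d M \<and> loewner_le d M (1\<^sub>m d)}"

definition exp_dem :: "complex mat \<Rightarrow> complex mat set \<Rightarrow> real" where
  "exp_dem \<rho> \<Theta> = (if \<Theta> = {} then Re (mtrace \<rho>) else (INF M\<in>\<Theta>. Re (mtrace (M * \<rho>))))"

definition exp_ang :: "complex mat \<Rightarrow> complex mat set \<Rightarrow> real" where
  "exp_ang \<rho> \<Theta> = (if \<Theta> = {} then 0 else (SUP M\<in>\<Theta>. Re (mtrace (M * \<rho>))))"

definition dem_le :: "nat \<Rightarrow> complex mat set \<Rightarrow> complex mat set \<Rightarrow> bool" where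
  "dem_le d \<Theta> \<Psi> \<longleftrightarrow> (\<forall>\<rho> \<in> pdensity d. exp_dem \<rho> \<Theta> \<le> exp_dem \<rho> \<Psi>)"

definition ang_le :: "nat \<Rightarrow> complex mat set \<Rightarrow> complex mat set \<Rightarrow> bool" where
  "ang_le d \<Theta> \<Psi> \<longleftrightarrow> (\<forall>\<rho> \<in> pdensity d. exp_ang \<rho> \<Theta> \<le> exp_ang \<rho> \<Psi>)"

definition hoare_le :: "nat \<Rightarrow> complex mat set \<Rightarrow> complex mat set \<Rightarrow> bool" where
  "hoare_le d \<Theta> \<Psi> \<longleftrightarrow> (\<forall>M \<in> \<Theta>. \<exists>N \<in> \<Psi>. loewner_le d M N)"

definition smyth_le :: "nat \<Rightarrow> complex mat set \<Rightarrow> complex mat set \<Rightarrow> bool" where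
  "smyth_le d \<Theta> \<Psi> \<longleftrightarrow> (\<forall>N \<in> \<Psi>. \<exists>M \<in> \<Theta>. loewner_le d M N)"

definition compl_set :: "nat \<Rightarrow> complex mat set \<Rightarrow> complex mat set" where
  "compl_set d \<Theta> = (\<lambda>M. 1\<^sub>m d - M) ` \<Theta>"

end

theory Submission
  imports Defs
begin

text \<open>Since \<open>tr ((I - M) \<rho>) = tr \<rho> - tr (M \<rho>)\<close>, the angelic expectation of \<open>I - \<Theta>\<close> is
  \<open>tr \<rho>\<close> minus the demonic expectation of \<open>\<Theta>\<close>; this needs the infimum to be finite, which holds
  because the entries of an effect are bounded, so \<open>tr (M \<rho>)\<close> is bounded below uniformly in \<open>M\<close>.
  For the second part, \<open>I - N \<sqsubseteq> I - M\<close> and \<open>M \<sqsubseteq> N\<close> both say that \<open>N - M\<close> is positive.\<close>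

lemma effects_carrier_mat: "effects d \<subseteq> carrier_mat d d"
  by (auto simp: effects_def positive_op_def)

lemma mult_unit_vec_eq_col:
  fixes A :: "'a::semiring_1 mat"
  assumes "A \<in> carrier_mat d d" and "i < d"
  shows "A *\<^sub>v unit_vec d i = col A i"
  by (rule eq_vecI) (use assms in auto)

lemma quadratic_form_unit_vec:
  fixes A :: "complex mat"
  assumes A: "A \<in> carrier_mat d d" and i: "i < d"
  shows "conjugate (unit_vec d i) \<bullet> (A *\<^sub>v unit_vec d i) = A $$ (i, i)"
proof -
  have "conjugate (unit_vec d i) = (unit_vec d i :: complex vec)"
    by (rule eq_vecI) (auto simp: conjugate_vec_def unit_vec_def)
  then show ?thesis
    using A i by (simp add: mult_unit_vec_eq_col)
qed

lemma quadratic_form_unit_vec_add: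
  fixes A :: "complex mat" and c :: complex
  assumes A: "A \<in> carrier_mat d d" and i: "i < d" and j: "j < d" and "i \<noteq> j"
  defines "v \<equiv> unit_vec d i + c \<cdot>\<^sub>v unit_vec d j"
  shows "conjugate v \<bullet> (A *\<^sub>v v)
    = A $$ (i, i) + c * A $$ (i, j) + cnj c * A $$ (j, i) + cnj c * c * A $$ (j, j)"
proof -
  have Av: "A *\<^sub>v v = col A i + c \<cdot>\<^sub>v col A j"
    using A i j by (simp add: v_def mult_add_distrib_mat_vec mult_mat_vec mult_unit_vec_eq_col)
  have cv: "conjugate v = unit_vec d i + cnj c \<cdot>\<^sub>v unit_vec d j"
    by (rule eq_vecI) (auto simp: v_def conjugate_vec_def unit_vec_def)
  show ?thesis
    unfolding Av cv using A i j \<open>i \<noteq> j\<close>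
    by (subst add_scalar_prod_distrib[of _ d]) (auto simp: ring_distribs mult.assoc)
qed

lemma positive_op_diag:
  assumes "positive_op d A" and "i < d"
  shows "Im (A $$ (i, i)) = 0" and "Re (A $$ (i, i)) \<ge> 0"
  using assms quadratic_form_unit_vec[of A d i] unfolding positive_op_def
  by (metis unit_vec_carrier)+

lemma positive_op_offdiag:
  fixes c :: complex
  assumes "positive_op d A" and "i < d" and "j < d" and "i \<noteq> j"
  defines "q \<equiv> A $$ (i, i) + c * A $$ (i, j) + cnj c * A $$ (j, i) + cnj c * c * A $$ (j, j)"
  shows "Im q = 0" and "Re q \<ge> 0"
  using assms quadratic_form_unit_vec_add[of A d i j c] unfolding positive_op_def
  by (metis add_carrier_vec smult_carrier_vec unit_vec_carrier)+

text \<open>Testing \<open>M\<close> and \<open>I - M\<close> on \<open>e\<^sub>i + e\<^sub>j\<close> and \<open>e\<^sub>i + \<i> e\<^sub>j\<close> shows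
  \<open>M\<^sub>j\<^sub>i = cnj M\<^sub>i\<^sub>j\<close> and \<open>|Re M\<^sub>i\<^sub>j|, |Im M\<^sub>i\<^sub>j| \<le> 1\<close>.\<close>
lemma effect_entry_bound:
  assumes M: "M \<in> effects d" and i: "i < d" and j: "j < d"
  shows "cmod (M $$ (i, j)) \<le> 2"
proof -
  have Mc: "M \<in> carrier_mat d d"
    using M effects_carrier_mat by blast
  have pM: "positive_op d M" and pN: "positive_op d (1\<^sub>m d - M)"
    using M by (auto simp: effects_def loewner_le_def)
  have diag: "Im (M $$ (k, k)) = 0" "0 \<le> Re (M $$ (k, k))" "Re (M $$ (k, k)) \<le> 1" if "k < d" for k
    using positive_op_diag[OF pM that] positive_op_diag[OF pN that] Mc that by auto
  show ?thesis
  proof (cases "i = j")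
    case True
    then show ?thesis
      using diag[OF i] cmod_le[of "M $$ (i, j)"] by auto
  next
    case False
    note offM = positive_op_offdiag[OF pM i j False]
    note offN = positive_op_offdiag[OF pN i j False]
    have "\<bar>Re (M $$ (i, j))\<bar> \<le> 1" "\<bar>Im (M $$ (i, j))\<bar> \<le> 1"
      using offM[of 1] offM[of \<i>] offN[of 1] offN[of \<i>] diag[OF i] diag[OF j] Mc i j False
      by auto
    then show ?thesis
      using cmod_le[of "M $$ (i, j)"] by linarith
  qed
qed

lemma mtrace_mult:
  fixes A B :: "complex mat"
  assumes "A \<in> carrier_mat d d" and "B \<in> carrier_mat d d"
  shows "mtrace (A * B) = (\<Sum>i<d. \<Sum>j<d. A $$ (i, j) * B $$ (j, i))"
  unfolding mtrace_def using assms
  by (auto simp: scalar_prod_def atLeast0LessThan intro!: sum.cong)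

lemma mtrace_one_minus_mult:
  fixes M \<rho> :: "complex mat"
  assumes M: "M \<in> carrier_mat d d" and \<rho>: "\<rho> \<in> carrier_mat d d"
  shows "mtrace ((1\<^sub>m d - M) * \<rho>) = mtrace \<rho> - mtrace (M * \<rho>)"
proof -
  have "(1\<^sub>m d - M) * \<rho> = \<rho> - M * \<rho>"
    using M \<rho> by (simp add: minus_mult_distrib_mat[OF one_carrier_mat M \<rho>])
  then show ?thesis
    using M \<rho> unfolding mtrace_def by (simp add: sum_subtractf)
qed

lemma effect_mtrace_mult_lower_bound:
  assumes M: "M \<in> effects d" and \<rho>: "\<rho> \<in> carrier_mat d d"
  shows "- (\<Sum>i<d. \<Sum>j<d. 2 * cmod (\<rho> $$ (j, i))) \<le> Re (mtrace (M * \<rho>))"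
proof -
  have Mc: "M \<in> carrier_mat d d"
    using M effects_carrier_mat by blast
  have "\<bar>Re (mtrace (M * \<rho>))\<bar> \<le> cmod (mtrace (M * \<rho>))"
    by (rule abs_Re_le_cmod)
  also have "\<dots> \<le> (\<Sum>i<d. \<Sum>j<d. cmod (M $$ (i, j)) * cmod (\<rho> $$ (j, i)))"
    unfolding mtrace_mult[OF Mc \<rho>] norm_mult[symmetric]
    by (intro order.trans[OF norm_sum] sum_mono norm_sum)
  also have "\<dots> \<le> (\<Sum>i<d. \<Sum>j<d. 2 * cmod (\<rho> $$ (j, i)))"
    by (intro sum_mono mult_right_mono effect_entry_bound[OF M]) auto
  finally show ?thesis
    by linarith
qed

lemma bdd_below_mtrace_mult_effects:
  assumes "\<Theta> \<subseteq> effects d" and "\<rho> \<in> carrier_mat d d"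
  shows "bdd_below ((\<lambda>M. Re (mtrace (M * \<rho>))) ` \<Theta>)"
  using assms effect_mtrace_mult_lower_bound unfolding bdd_below_def by blast

lemma cSUP_diff_eq_diff_cINF:
  fixes f :: "'a \<Rightarrow> 'b::{conditionally_complete_linorder,ordered_ab_group_add}"
  assumes "bdd_below (f ` A)" and "A \<noteq> {}"
  shows "(SUP x\<in>A. c - f x) = c - (INF x\<in>A. f x)"
  using Sup_add_eq[of "\<lambda>x. - f x" A c] uminus_cINF[OF assms] assms
  by (simp add: bdd_above_uminus_image)

lemma exp_ang_compl_set:
  assumes \<Theta>: "\<Theta> \<subseteq> effects d" and \<rho>: "\<rho> \<in> pdensity d"
  shows "exp_ang \<rho> (compl_set d \<Theta>) = Re (mtrace \<rho>) - exp_dem \<rho> \<Theta>"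
proof (cases "\<Theta> = {}")
  case True
  then show ?thesis
    by (simp add: exp_ang_def exp_dem_def compl_set_def)
next
  case False
  have \<rho>c: "\<rho> \<in> carrier_mat d d"
    using \<rho> by (auto simp: pdensity_def positive_op_def)
  have "Re (mtrace ((1\<^sub>m d - M) * \<rho>)) = Re (mtrace \<rho>) - Re (mtrace (M * \<rho>))"
    if "M \<in> \<Theta>" for M
    using that \<Theta> effects_carrier_mat[of d] mtrace_one_minus_mult[OF _ \<rho>c] by auto
  then have "exp_ang \<rho> (compl_set d \<Theta>) = (SUP M\<in>\<Theta>. Re (mtrace \<rho>) - Re (mtrace (M * \<rho>)))"
    using False unfolding exp_ang_def compl_set_def image_image
    by (auto intro!: SUP_cong)
  also have "\<dots> = Re (mtrace \<rho>) - exp_dem \<rho> \<Theta>"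
    using cSUP_diff_eq_diff_cINF[OF bdd_below_mtrace_mult_effects[OF \<Theta> \<rho>c] False]
    by (simp add: exp_dem_def False)
  finally show ?thesis .
qed

lemma dem_le_iff_ang_le_compl_set:
  assumes "\<Theta> \<subseteq> effects d" and "\<Psi> \<subseteq> effects d"
  shows "dem_le d \<Theta> \<Psi> \<longleftrightarrow> ang_le d (compl_set d \<Psi>) (compl_set d \<Theta>)"
  unfolding dem_le_def ang_le_def
  using exp_ang_compl_set[OF assms(1)] exp_ang_compl_set[OF assms(2)] by auto

lemma loewner_le_one_minus_iff:
  "loewner_le d (1\<^sub>m d - N) (1\<^sub>m d - M) \<longleftrightarrow> loewner_le d M N"
proof -
  have carrier: "1\<^sub>m d - A \<in> carrier_mat d d \<longleftrightarrow> A \<in> carrier_mat d d" for A :: "complex mat"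
    unfolding carrier_mat_def by simp
  have "(1\<^sub>m d - M) - (1\<^sub>m d - N) = N - M"
    if "M \<in> carrier_mat d d" "N \<in> carrier_mat d d"
    using that by (intro eq_matI) auto
  then show ?thesis
    unfolding loewner_le_def carrier by auto
qed

lemma smyth_le_iff_hoare_le_compl_set:
  "smyth_le d \<Theta> \<Psi> \<longleftrightarrow> hoare_le d (compl_set d \<Psi>) (compl_set d \<Theta>)"
  unfolding smyth_le_def hoare_le_def compl_set_def
  by (simp add: loewner_le_one_minus_iff)

theorem lemma3p3:
  fixes d :: nat and \<Theta> \<Psi> :: "complex mat set"
  assumes "\<Theta> \<subseteq> effects d" and "\<Psi> \<subseteq> effects d"
  shows "(dem_le d \<Theta> \<Psi> \<longleftrightarrow> ang_le d (compl_set d \<Psi>) (compl_set d \<Theta>))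
       \<and> (smyth_le d \<Theta> \<Psi> \<longleftrightarrow> hoare_le d (compl_set d \<Psi>) (compl_set d \<Theta>))"
  using dem_le_iff_ang_le_compl_set[OF assms] smyth_le_iff_hoare_le_compl_set by blast

end
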